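(* There exists $h_c\in(\tfrac12,\tfrac34)$ such that $\sum_{k=1}^\infty\rho_h^2(k)<\frac14$ for all $h\in(\tfrac12,h_c)$, and $\sum_{k=1}^\infty\rho_h^2(k)>\frac14$ for all $h\in(h_c,\tfrac34)$.
   Context: $\rho_h(k)=\frac12\big((k+1)^{2h}+(k-1)^{2h}-2k^{2h}\big)$ for integers $k\ge1$. *)

theory Defs
  imports "HOL-Analysis.Analysis"
begin

definition rho :: "real \<Rightarrow> nat \<Rightarrow> real" where
  "rho h k = ((real k + 1) powr (2*h) + (real k - 1) powr (2*h) - 2 * (real k) powr (2*h)) / 2"

end

theory Submission
  imports Defs
begin

text \<open>
  \<open>\<rho>\<^sub>h(k)\<close> is half the second difference of \<open>x \<mapsto> x\<^bsup>2h\<^esup>\<close> at \<open>k\<close>. Comparing second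
  derivatives shows that for \<open>h \<ge> 1/2\<close> it is nonnegative, nondecreasing in \<open>h\<close>, and at most
  \<open>h(2h-1)(k-1)\<^bsup>2h-2\<^esup>\<close> for \<open>k \<ge> 2\<close>. Hence \<open>S(h) = \<Sum>\<^sub>k \<rho>\<^sub>h(k)\<^sup>2\<close> converges on \<open>[1/2, 3/4)\<close>,
  is strictly increasing there (the term \<open>k = 1\<close> is strictly increasing), and tends to \<open>0\<close>
  as \<open>h \<rightarrow> 1/2\<close>. At \<open>h = 3/4\<close> the first three terms alone sum to about \<open>0.29 > 1/4\<close>, so by
  continuity \<open>S(h) > 1/4\<close> near \<open>3/4\<close>. The crossing point \<open>h\<^sub>c\<close> is the supremum of
  \<open>{h. S(h) < 1/4}\<close>.
\<close>

lemma strict_mono_on_crossing_point: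
  fixes S :: "real \<Rightarrow> 'a::linorder"
  assumes "a < b" and mono: "strict_mono_on {a<..<b} S"
    and below: "eventually (\<lambda>h. S h < c) (at_right a)"
    and above: "eventually (\<lambda>h. c < S h) (at_left b)"
  shows "\<exists>t. a < t \<and> t < b \<and> (\<forall>h. a < h \<and> h < t \<longrightarrow> S h < c) \<and> (\<forall>h. t < h \<and> h < b \<longrightarrow> c < S h)"
proof -
  obtain x where x: "x \<in> {a<..<b}" "S x < c"
    using eventually_happens'[OF _ eventually_conj[OF eventually_at_right_real[OF \<open>a < b\<close>] below]] by auto
  obtain y where y: "y \<in> {a<..<b}" "c < S y"
    using eventually_happens'[OF _ eventually_conj[OF eventually_at_left_real[OF \<open>a < b\<close>] above]] by auto
  define A where "A = {h \<in> {a<..<b}. S h < c}"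
  define t where "t = Sup A"
  have less_y: "h < y" if "h \<in> A" for h
  proof (rule ccontr)
    assume "\<not> h < y"
    then have "S y \<le> S h"
      using that y mono unfolding A_def by (cases "y = h") (auto dest: strict_mono_onD[of _ _ y h])
    with that y show False
      unfolding A_def by auto
  qed
  have bdd: "bdd_above A"
    using less_y by (meson bdd_aboveI less_imp_le)
  have "x \<in> A"
    using x by (simp add: A_def)
  then have "x \<le> t"
    unfolding t_def using bdd by (rule cSup_upper)
  have "t \<le> y"
    unfolding t_def using \<open>x \<in> A\<close> less_y by (intro cSup_least) (auto intro: less_imp_le)
  moreover have "S h < c" if "a < h" "h < t" for h
  proof -
    obtain h' where "h' \<in> A" "h < h'"
      using \<open>h < t\<close> \<open>x \<in> A\<close> less_cSup_iff[OF _ bdd] unfolding t_def by blast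
    then show ?thesis
      using that mono unfolding A_def by (auto dest: strict_mono_onD[of _ _ h h'])
  qed
  moreover have "c < S h" if "t < h" "h < b" for h
  proof -
    define m where "m = (t + h) / 2"
    have m: "t < m" "m < h"
      using that by (auto simp: m_def)
    then have "m \<notin> A"
      using cSup_upper[OF _ bdd] unfolding t_def by fastforce
    moreover have "a < m"
      using x \<open>x \<le> t\<close> m by auto
    ultimately show ?thesis
      using m that mono unfolding A_def by (auto dest: strict_mono_onD[of _ _ m h])
  qed
  ultimately show ?thesis
    using x y \<open>x \<le> t\<close> by (intro exI[of _ t]) auto
qed
lemma suminf_less:
  fixes f g :: "nat \<Rightarrow> real"
  assumes "summable f" "summable g" "\<And>n. f n \<le> g n" "f i < g i"
  shows "suminf f < suminf g"
proof -
  have "0 < (\<Sum>n. g n - f n)"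
    using assms by (intro suminf_pos2[where i=i] summable_diff) auto
  also have "\<dots> = suminf g - suminf f"
    using assms by (simp add: suminf_diff)
  finally show ?thesis
    by simp
qed

lemma powr_three_halves: "0 \<le> x \<Longrightarrow> x powr (3/2) = x * sqrt x"
  using powr_add[of x 1 "1/2"] by (simp add: powr_half_sqrt)

lemma second_difference_ge:
  fixes f f' f'' :: "real \<Rightarrow> real"
  assumes "0 \<le> d"
    and f': "\<And>x. x \<in> {c-d..c+d} \<Longrightarrow> (f has_real_derivative f' x) (at x)"
    and f'': "\<And>x. x \<in> {c-d..c+d} \<Longrightarrow> (f' has_real_derivative f'' x) (at x)"
    and lower: "\<And>x. x \<in> {c-d..c+d} \<Longrightarrow> m \<le> f'' x"
  shows "m * d\<^sup>2 \<le> f (c+d) + f (c-d) - 2 * f c"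
proof -
  define g where "g x = f x - m/2 * x\<^sup>2" for x
  have "convex_on {c-d..c+d} g"
  proof (rule f''_ge0_imp_convex)
    fix x assume x: "x \<in> {c-d..c+d}"
    show "(g has_real_derivative f' x - m * x) (at x)"
      unfolding g_def[abs_def] by (rule derivative_eq_intros f'[OF x] refl | simp)+
    show "((\<lambda>x. f' x - m * x) has_real_derivative f'' x - m) (at x)"
      by (rule derivative_eq_intros f''[OF x] refl | simp)+
    show "0 \<le> f'' x - m"
      using lower[OF x] by simp
  qed simp
  then have "g ((1 - 1/2) *\<^sub>R (c-d) + (1/2) *\<^sub>R (c+d)) \<le> (1 - 1/2) * g (c-d) + (1/2) * g (c+d)"
    by (rule convex_onD) (use \<open>0 \<le> d\<close> in auto)
  moreover have "(1 - 1/2) *\<^sub>R (c-d) + (1/2) *\<^sub>R (c+d) = c"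
    by (simp add: field_simps)
  ultimately have "g c \<le> (g (c-d) + g (c+d)) / 2"
    by simp
  then show ?thesis
    by (simp add: g_def power2_eq_square algebra_simps)
qed

lemma rho_Suc_0: "rho h (Suc 0) = 2 powr (2*h) / 2 - 1"
  by (simp add: rho_def)

lemma rho_half: "1 \<le> k \<Longrightarrow> rho (1/2) k = 0"
  by (simp add: rho_def)

lemma rho_mono:
  assumes "1/2 \<le> h" "h \<le> h'" "1 \<le> k"
  shows "rho h k \<le> rho h' k"
proof (cases "k = 1")
  case True
  have "2 powr (2*h) \<le> 2 powr (2*h')"
    using assms by (intro powr_mono) auto
  then show ?thesis
    using True by (simp add: rho_Suc_0)
next
  case False
  define a b where "a = 2*h" and "b = 2*h'"
  have ab: "1 \<le> a" "a \<le> b"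
    using assms by (auto simp: a_def b_def)
  have "0 * 1\<^sup>2 \<le> (\<lambda>x. x powr b - x powr a) (real k + 1) + (\<lambda>x. x powr b - x powr a) (real k - 1)
      - 2 * (\<lambda>x. x powr b - x powr a) (real k)"
  proof (rule second_difference_ge[where f' = "\<lambda>x. b * x powr (b-1) - a * x powr (a-1)"
        and f'' = "\<lambda>x. b * (b-1) * x powr (b-2) - a * (a-1) * x powr (a-2)"])
    fix x assume "x \<in> {real k - 1..real k + 1}"
    then have x: "1 \<le> x"
      using False assms(3) by auto
    show "((\<lambda>x. x powr b - x powr a) has_real_derivative b * x powr (b-1) - a * x powr (a-1)) (at x)"
      using x by (auto intro!: derivative_eq_intros simp: algebra_simps)
    show "((\<lambda>x. b * x powr (b-1) - a * x powr (a-1)) has_real_derivative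
        b * (b-1) * x powr (b-2) - a * (a-1) * x powr (a-2)) (at x)"
      using x by (auto intro!: derivative_eq_intros simp: algebra_simps)
    have "a * (a-1) * x powr (a-2) \<le> b * (b-1) * x powr (b-2)"
      using x ab by (intro mult_mono powr_mono) auto
    then show "0 \<le> b * (b-1) * x powr (b-2) - a * (a-1) * x powr (a-2)"
      by simp
  qed simp
  then show ?thesis
    unfolding rho_def a_def b_def by (simp add: field_simps)
qed

lemma rho_nonneg: "1/2 \<le> h \<Longrightarrow> 1 \<le> k \<Longrightarrow> 0 \<le> rho h k"
  using rho_mono[of "1/2" h k] rho_half[of k] by simp

lemma rho_le:
  assumes "1/2 \<le> h" "h \<le> 1" "2 \<le> k"
  shows "rho h k \<le> h * (2*h-1) * (real k - 1) powr (2*h-2)"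
proof -
  define a where "a = 2*h"
  have a: "1 \<le> a" "a \<le> 2"
    using assms by (auto simp: a_def)
  have "- (a * (a-1) * (real k - 1) powr (a-2)) * 1\<^sup>2 \<le>
      (\<lambda>x. - (x powr a)) (real k + 1) + (\<lambda>x. - (x powr a)) (real k - 1) - 2 * (\<lambda>x. - (x powr a)) (real k)"
  proof (rule second_difference_ge[where f' = "\<lambda>x. - (a * x powr (a-1))"
        and f'' = "\<lambda>x. - (a * (a-1) * x powr (a-2))"])
    fix x assume x: "x \<in> {real k - 1..real k + 1}"
    then have "0 < x"
      using assms(3) by auto
    then show "((\<lambda>x. - (x powr a)) has_real_derivative - (a * x powr (a-1))) (at x)"
      and "((\<lambda>x. - (a * x powr (a-1))) has_real_derivative - (a * (a-1) * x powr (a-2))) (at x)"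
      by (auto intro!: derivative_eq_intros simp: algebra_simps)
    have "x powr (a-2) \<le> (real k - 1) powr (a-2)"
      using x assms(3) a by (intro powr_mono2') auto
    then show "- (a * (a-1) * (real k - 1) powr (a-2)) \<le> - (a * (a-1) * x powr (a-2))"
      using a by (simp add: mult_left_mono)
  qed simp
  then show ?thesis
    unfolding rho_def a_def by (simp add: field_simps)
qed

lemma rho_Suc_sq_le:
  assumes "1/2 \<le> h" "h \<le> 1" "1 \<le> k"
  shows "(rho h (Suc k))\<^sup>2 \<le> (h * (2*h-1))\<^sup>2 * real k powr (4*h-4)"
proof -
  have "(rho h (Suc k))\<^sup>2 \<le> (h * (2*h-1) * real k powr (2*h-2))\<^sup>2"
    using assms rho_le[of h "Suc k"] rho_nonneg[of h "Suc k"] by (intro power_mono) auto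
  also have "\<dots> = (h * (2*h-1))\<^sup>2 * real k powr (4*h-4)"
    by (simp add: power_mult_distrib power2_eq_square powr_add[symmetric])
  finally show ?thesis .
qed

lemma summable_rho_Suc_sq:
  assumes "1/2 \<le> h" "h < 3/4"
  shows "summable (\<lambda>k. (rho h (Suc k))\<^sup>2)"
proof (rule summable_comparison_test)
  show "\<exists>N. \<forall>k\<ge>N. norm ((rho h (Suc k))\<^sup>2) \<le> (h * (2*h-1))\<^sup>2 * real k powr (4*h-4)"
    using rho_Suc_sq_le assms by (intro exI[of _ 1]) auto
  show "summable (\<lambda>k. (h * (2*h-1))\<^sup>2 * real k powr (4*h-4))"
    using assms by (intro summable_mult) (simp add: summable_real_powr_iff)
qed

lemma strict_mono_on_suminf_rho_Suc_sq:
  "strict_mono_on {1/2..<3/4} (\<lambda>h. \<Sum>k. (rho h (Suc k))\<^sup>2)"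
proof (rule strict_mono_onI)
  fix h h' :: real assume h: "h \<in> {1/2..<3/4}" "h' \<in> {1/2..<3/4}" "h < h'"
  show "(\<Sum>k. (rho h (Suc k))\<^sup>2) < (\<Sum>k. (rho h' (Suc k))\<^sup>2)"
  proof (rule suminf_less[where i=0])
    show "summable (\<lambda>k. (rho h (Suc k))\<^sup>2)" "summable (\<lambda>k. (rho h' (Suc k))\<^sup>2)"
      using h by (auto intro: summable_rho_Suc_sq)
    show "(rho h (Suc k))\<^sup>2 \<le> (rho h' (Suc k))\<^sup>2" for k
      using h rho_mono[of h h' "Suc k"] rho_nonneg[of h "Suc k"] by (intro power_mono) auto
    have "2 powr (2*h) < 2 powr (2*h')"
      using h by (intro powr_less_mono) auto
    then show "(rho h (Suc 0))\<^sup>2 < (rho h' (Suc 0))\<^sup>2"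
      using h rho_nonneg[of h "Suc 0"] by (intro power_strict_mono) (auto simp: rho_Suc_0)
  qed
qed

text \<open>Fixing the exponent \<open>-3/2 \<ge> 4h - 4\<close> makes the bound continuous in \<open>h\<close>.\<close>

lemma suminf_rho_Suc_sq_le:
  assumes "1/2 \<le> h" "h \<le> 5/8"
  shows "(\<Sum>k. (rho h (Suc k))\<^sup>2) \<le>
    (2 powr (2*h) / 2 - 1)\<^sup>2 + (2*h-1)\<^sup>2 * (\<Sum>k. real (Suc k) powr (-3/2))"
proof -
  have zeta: "summable (\<lambda>k. real (Suc k) powr (-3/2))"
    using summable_Suc_iff[of "\<lambda>k. real k powr (-3/2)"] by (simp add: summable_real_powr_iff)
  have summable: "summable (\<lambda>k. (rho h (Suc k))\<^sup>2)"
    using assms by (intro summable_rho_Suc_sq) auto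
  have tail: "(rho h (Suc (Suc k)))\<^sup>2 \<le> (2*h-1)\<^sup>2 * real (Suc k) powr (-3/2)" for k
  proof -
    have "(rho h (Suc (Suc k)))\<^sup>2 \<le> (h * (2*h-1))\<^sup>2 * real (Suc k) powr (4*h-4)"
      using assms by (intro rho_Suc_sq_le) auto
    also have "\<dots> \<le> (2*h-1)\<^sup>2 * real (Suc k) powr (-3/2)"
    proof (rule mult_mono)
      show "(h * (2*h-1))\<^sup>2 \<le> (2*h-1)\<^sup>2"
        using assms by (simp add: power_mult_distrib power_le_one mult_left_le_one_le)
      show "real (Suc k) powr (4*h-4) \<le> real (Suc k) powr (-3/2)"
        using assms by (intro powr_mono) auto
    qed auto
    finally show ?thesis .
  qed
  have "(\<Sum>k. (rho h (Suc k))\<^sup>2) = (rho h (Suc 0))\<^sup>2 + (\<Sum>k. (rho h (Suc (Suc k)))\<^sup>2)"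
    using suminf_split_head[OF summable] by simp
  also have "(\<Sum>k. (rho h (Suc (Suc k)))\<^sup>2) \<le> (\<Sum>k. (2*h-1)\<^sup>2 * real (Suc k) powr (-3/2))"
    using tail summable zeta summable_Suc_iff[of "\<lambda>k. (rho h (Suc k))\<^sup>2"]
    by (intro suminf_le summable_mult) auto
  also have "\<dots> = (2*h-1)\<^sup>2 * (\<Sum>k. real (Suc k) powr (-3/2))"
    using zeta by (rule suminf_mult)
  finally show ?thesis
    by (simp add: rho_Suc_0)
qed

lemma eventually_suminf_rho_Suc_sq_less:
  "eventually (\<lambda>h. (\<Sum>k. (rho h (Suc k))\<^sup>2) < 1/4) (at_right (1/2))"
proof -
  define g where "g h = (2 powr (2*h) / 2 - 1)\<^sup>2 + (2*h-1)\<^sup>2 * (\<Sum>k. real (Suc k) powr (-3/2))"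
    for h :: real
  have "(g \<longlongrightarrow> g (1/2)) (at_right (1/2))"
    unfolding g_def by (intro tendsto_intros) auto
  then have "eventually (\<lambda>h. g h < 1/4) (at_right (1/2))"
    by (rule order_tendstoD) (simp add: g_def)
  moreover have "eventually (\<lambda>h. h \<in> {1/2<..<5/8}) (at_right (1/2::real))"
    by (rule eventually_at_right_real) simp
  ultimately show ?thesis
  proof eventually_elim
    case (elim h)
    then show ?case
      using suminf_rho_Suc_sq_le[of h] by (simp add: g_def)
  qed
qed

lemma isCont_rho: "1 \<le> k \<Longrightarrow> isCont (\<lambda>h. rho h k) h0"
  unfolding rho_def by (cases "k = 1") (auto intro!: continuous_intros)

lemma sum_rho_Suc_sq_three_quarters_gt: "1/4 < (\<Sum>k<3. (rho (3/4) (Suc k))\<^sup>2)"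
proof -
  have "(\<Sum>k<3. (rho (3/4) (Suc k))\<^sup>2) =
      ((2 * sqrt 2 - 2) / 2)\<^sup>2 + ((3 * sqrt 3 + 1 - 4 * sqrt 2) / 2)\<^sup>2 + ((8 + 2 * sqrt 2 - 6 * sqrt 3) / 2)\<^sup>2"
    by (simp add: rho_def eval_nat_numeral powr_three_halves real_sqrt_four)
  also have "\<dots> = 63 + 4 * sqrt 2 - 45/2 * sqrt 3 - 12 * (sqrt 2 * sqrt 3)"
  proof -
    have "((2 * s - 2) / 2)\<^sup>2 + ((3 * t + 1 - 4 * s) / 2)\<^sup>2 + ((8 + 2 * s - 6 * t) / 2)\<^sup>2 =
        63 + 4 * s - 45/2 * t - 12 * (s * t)" if "s * s = 2" "t * t = 3" for s t :: real
      using that by (simp add: power2_eq_square field_simps)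
    then show ?thesis
      by simp
  qed
  also have "\<dots> > 1/4"
  proof -
    have "14142/10000 \<le> sqrt (2::real)"
      by (rule real_le_rsqrt) (simp add: power2_eq_square)
    moreover have "sqrt (3::real) \<le> 173206/100000"
      by (rule real_le_lsqrt) (simp_all add: power2_eq_square)
    moreover have "sqrt 2 * sqrt 3 \<le> (24495/10000::real)"
      unfolding real_sqrt_mult[symmetric] by (rule real_le_lsqrt) (simp_all add: power2_eq_square)
    ultimately show ?thesis
      by linarith
  qed
  finally show ?thesis .
qed

lemma eventually_suminf_rho_Suc_sq_greater:
  "eventually (\<lambda>h. 1/4 < (\<Sum>k. (rho h (Suc k))\<^sup>2)) (at_left (3/4))"
proof -
  define g where "g h = (\<Sum>k<3. (rho h (Suc k))\<^sup>2)" for h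
  have "isCont g (3/4)"
    unfolding g_def by (intro continuous_intros isCont_rho) simp
  then have "(g \<longlongrightarrow> g (3/4)) (at_left (3/4))"
    by (simp add: isCont_def filterlim_at_split)
  then have "eventually (\<lambda>h. 1/4 < g h) (at_left (3/4))"
    by (rule order_tendstoD) (unfold g_def, rule sum_rho_Suc_sq_three_quarters_gt)
  moreover have "eventually (\<lambda>h. h \<in> {1/2<..<3/4}) (at_left (3/4::real))"
    by (rule eventually_at_left_real) simp
  ultimately show ?thesis
  proof eventually_elim
    case (elim h)
    then have "g h \<le> (\<Sum>k. (rho h (Suc k))\<^sup>2)"
      unfolding g_def by (intro sum_le_suminf summable_rho_Suc_sq) auto
    with elim show ?case
      by simp
  qed
qed

theorem corollaryA5:
  shows "\<exists>hc::real. 1/2 < hc \<and> hc < 3/4 \<and>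
    (\<forall>h. 1/2 < h \<and> h < hc \<longrightarrow> (\<Sum>k. (rho h (Suc k))\<^sup>2) < 1/4) \<and>
    (\<forall>h. hc < h \<and> h < 3/4 \<longrightarrow> (\<Sum>k. (rho h (Suc k))\<^sup>2) > 1/4)"
proof (rule strict_mono_on_crossing_point)
  show "strict_mono_on {1/2<..<3/4} (\<lambda>h. \<Sum>k. (rho h (Suc k))\<^sup>2)"
    using strict_mono_on_suminf_rho_Suc_sq by (rule monotone_on_subset) auto
qed (simp, fact eventually_suminf_rho_Suc_sq_less, fact eventually_suminf_rho_Suc_sq_greater)

end
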